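(* Let $q\in(1,+\infty)$, $T>0$, $x<0$ and $v>0$ be such that $\frac{2q-1}{q-1}\frac{|x|}{v}<T$. For $\theta\in(0,T]$ let $$I(\theta,0)=\inf\Big\{\frac1q\int_0^\theta|\eta'(s)|^q ds:\ \eta\in W^{1,q}(0,\theta;\mathbb R),\ \eta(0)=v,\ \eta(\theta)=0,\ \eta\ge 0 \text{ on }[0,\theta],\ x+\int_0^\theta\eta(s)ds\le0\Big\}.$$ Then $\theta\mapsto I(\theta,0)$ is non-increasing on $(0,T]$, and its minimal value on $(0,T)$ is $\frac{q^{q-1}}{(2q-1)^q}\frac{v^{2q-1}}{|x|^{q-1}}$. *)

theory Defs
  imports "HOL-Analysis.Analysis"
begin

text \<open>One-dimensional Sobolev space W^{1,q}(0,theta): eta (continuous representative)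
  together with its weak derivative g in L^q(0,theta), i.e. eta is absolutely continuous
  with eta(t) = eta(0) + int_0^t g.\<close>
definition W1q_pair :: "real \<Rightarrow> real \<Rightarrow> (real \<Rightarrow> real) \<Rightarrow> (real \<Rightarrow> real) \<Rightarrow> bool" where
  "W1q_pair q \<theta> \<eta> g \<longleftrightarrow>
     g absolutely_integrable_on {0..\<theta>} \<and>
     (\<lambda>s. \<bar>g s\<bar> powr q) integrable_on {0..\<theta>} \<and>
     (\<forall>t\<in>{0..\<theta>}. \<eta> t = \<eta> 0 + integral {0..t} g)"

definition I_cost :: "real \<Rightarrow> real \<Rightarrow> real \<Rightarrow> real \<Rightarrow> real" where
  "I_cost q x v \<theta> = Inf {(1/q) * integral {0..\<theta>} (\<lambda>s. \<bar>g s\<bar> powr q) | \<eta> g.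
      W1q_pair q \<theta> \<eta> g \<and> \<eta> 0 = v \<and> \<eta> \<theta> = 0 \<and> (\<forall>s\<in>{0..\<theta>}. \<eta> s \<ge> 0) \<and>
      x + integral {0..\<theta>} \<eta> \<le> 0}"

end

theory Submission
  imports Defs
begin

text \<open>Put \<open>\<alpha> = (2q-1)/q\<close> and \<open>p = q/(q-1)\<close>, so that \<open>(\<alpha>-1) p = 1\<close>. For an admissible
  path \<open>\<eta>\<close> the chain rule gives \<open>v\<^sup>\<alpha> = - \<integral> \<alpha> \<eta>\<^bsup>\<alpha>-1\<^esup> \<eta>'\<close>, and Young's inequality with a free
  scale \<open>\<mu>\<close> bounds the integrand by \<open>\<alpha> (\<mu>\<^sup>p \<eta> / p + |\<eta>'|\<^sup>q / (q \<mu>\<^sup>q))\<close>. Integrating, using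
  \<open>\<integral> \<eta> \<le> |x|\<close> and optimising in \<open>\<mu>\<close> yields \<open>v\<^sup>\<alpha> \<le> \<alpha> |x|\<^bsup>1/p\<^esup> (\<integral> |\<eta>'|\<^sup>q)\<^bsup>1/q\<^esup>\<close>, which is the
  claimed lower bound. It is attained by \<open>v (1 - s/\<tau>)\<^sup>p\<close> with \<open>\<tau> = (2q-1)/(q-1) |x|/v\<close>, for
  which the area constraint is tight. Extending admissible paths by zero shows that the
  cost is non-increasing in the horizon.\<close>

lemma eq_if_increments_bounded:
  fixes F G :: "real \<Rightarrow> real"
  assumes "a \<le> b"
    and small: "\<And>\<epsilon>. \<epsilon> > 0 \<Longrightarrow> \<exists>\<delta>>0. \<forall>t t'. a \<le> t \<longrightarrow> t \<le> t' \<longrightarrow> t' \<le> b \<longrightarrow> t' - t < \<delta> \<longrightarrow>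
              \<bar>F t' - F t\<bar> \<le> \<epsilon> * (G t' - G t)"
  shows "F b = F a"
proof -
  have bound: "\<bar>F b - F a\<bar> \<le> \<epsilon> * (G b - G a)" if \<epsilon>: "\<epsilon> > 0" for \<epsilon>
  proof -
    obtain \<delta> where "\<delta> > 0" and \<delta>: "\<forall>t t'. a \<le> t \<longrightarrow> t \<le> t' \<longrightarrow> t' \<le> b \<longrightarrow> t' - t < \<delta> \<longrightarrow>
        \<bar>F t' - F t\<bar> \<le> \<epsilon> * (G t' - G t)"
      using small[OF \<epsilon>] by blast
    have steps: "\<bar>F t - F a\<bar> \<le> \<epsilon> * (G t - G a)"
      if "a \<le> t" "t \<le> b" "t \<le> a + real n * (\<delta>/2)" for n t
      using that
    proof (induction n arbitrary: t)
      case 0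
      then show ?case by simp
    next
      case (Suc n)
      define t0 where "t0 = max a (t - \<delta>/2)"
      have t0: "a \<le> t0" "t0 \<le> t" "t0 \<le> a + real n * (\<delta>/2)" "t - t0 < \<delta>"
        using Suc.prems \<open>\<delta> > 0\<close> by (auto simp: t0_def max_def field_simps)
      have "\<bar>F t0 - F a\<bar> \<le> \<epsilon> * (G t0 - G a)"
        using Suc.IH t0 Suc.prems by simp
      moreover have "\<bar>F t - F t0\<bar> \<le> \<epsilon> * (G t - G t0)"
        using \<delta> t0 Suc.prems by blast
      ultimately show ?case by (simp add: algebra_simps)
    qed
    obtain n where "(b - a) / (\<delta>/2) \<le> real n"
      using real_arch_simple by blast
    then have "b \<le> a + real n * (\<delta>/2)"
      using \<open>\<delta> > 0\<close> by (simp add: field_simps)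
    then show ?thesis
      using steps assms(1) by simp
  qed
  show ?thesis
  proof (rule ccontr)
    assume "F b \<noteq> F a"
    define d where "d = \<bar>F b - F a\<bar>"
    define K where "K = \<bar>G b - G a\<bar> + 1"
    have "d > 0" "K > 0"
      using \<open>F b \<noteq> F a\<close> by (auto simp: d_def K_def)
    have "d \<le> d / (2*K) * (G b - G a)"
      using bound[of "d / (2*K)"] \<open>d > 0\<close> \<open>K > 0\<close> by (simp add: d_def)
    also have "\<dots> \<le> d / (2*K) * K"
      using \<open>d > 0\<close> \<open>K > 0\<close> by (intro mult_left_mono) (auto simp: K_def)
    also have "\<dots> = d / 2"
      using \<open>K > 0\<close> by simp
    finally show False
      using \<open>d > 0\<close> by simp
  qed
qed

lemma MVT_nonneg:
  fixes \<phi> \<psi> :: "real \<Rightarrow> real"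
  assumes "0 \<le> y" "y \<le> y'" and "continuous_on {0..} \<phi>"
    and der: "\<And>z. 0 < z \<Longrightarrow> (\<phi> has_real_derivative \<psi> z) (at z)"
  obtains z where "z \<in> {y..y'}" "\<phi> y' - \<phi> y = \<psi> z * (y' - y)"
proof (cases "y = y'")
  case True
  then show ?thesis
    using that[of y] by simp
next
  case False
  then have "y < y'"
    using assms(2) by simp
  have "continuous_on {y..y'} \<phi>"
    using continuous_on_subset assms(1,3) by fastforce
  moreover have "\<phi> differentiable (at z)" if "y < z" for z
    using der[of z] that assms(1) real_differentiable_def by fastforce
  ultimately obtain l z where z: "y < z" "z < y'" "DERIV \<phi> z :> l" "\<phi> y' - \<phi> y = (y' - y) * l"
    using MVT[OF \<open>y < y'\<close>] by blast
  moreover have "l = \<psi> z"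
    using DERIV_unique[OF z(3) der[of z]] z(1) assms(1) by simp
  ultimately show ?thesis
    using that[of z] by simp
qed

lemma MVT_nonneg_comp:
  fixes \<eta> \<phi> \<psi> :: "real \<Rightarrow> real"
  assumes "t \<le> t'" and \<eta>: "continuous_on {t..t'} \<eta>" and nonneg: "\<forall>s\<in>{t..t'}. 0 \<le> \<eta> s"
    and \<phi>: "continuous_on {0..} \<phi>" and der: "\<And>z. 0 < z \<Longrightarrow> (\<phi> has_real_derivative \<psi> z) (at z)"
  obtains s where "s \<in> {t..t'}" "\<phi> (\<eta> t') - \<phi> (\<eta> t) = \<psi> (\<eta> s) * (\<eta> t' - \<eta> t)"
proof (cases "\<eta> t \<le> \<eta> t'")
  case True
  obtain z where z: "z \<in> {\<eta> t..\<eta> t'}" "\<phi> (\<eta> t') - \<phi> (\<eta> t) = \<psi> z * (\<eta> t' - \<eta> t)"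
    using MVT_nonneg[OF _ True \<phi> der] nonneg \<open>t \<le> t'\<close> by auto
  moreover obtain s where "s \<in> {t..t'}" "\<eta> s = z"
    using IVT'[of \<eta> t z t', OF _ _ \<open>t \<le> t'\<close> \<eta>] z(1) by auto
  ultimately show ?thesis
    using that by blast
next
  case False
  obtain z where z: "z \<in> {\<eta> t'..\<eta> t}" "\<phi> (\<eta> t) - \<phi> (\<eta> t') = \<psi> z * (\<eta> t - \<eta> t')"
    using MVT_nonneg[of "\<eta> t'" "\<eta> t", OF _ _ \<phi> der] False nonneg \<open>t \<le> t'\<close> by auto
  moreover obtain s where "s \<in> {t..t'}" "\<eta> s = z"
    using IVT2'[of \<eta> t' z t, OF _ _ \<open>t \<le> t'\<close> \<eta>] z(1) by auto
  ultimately show ?thesis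
    using that[of s] by (simp add: algebra_simps)
qed

lemma continuous_on_if_indefinite_integral:
  fixes \<eta> g :: "real \<Rightarrow> real"
  assumes "g integrable_on {a..b}" and "\<forall>t\<in>{a..b}. \<eta> t = \<eta> a + integral {a..t} g"
  shows "continuous_on {a..b} \<eta>"
proof -
  have "continuous_on {a..b} (\<lambda>t. \<eta> a + integral {a..t} g)"
    by (intro continuous_intros indefinite_integral_continuous_1 assms(1))
  then show ?thesis
    using continuous_on_eq assms(2) by (metis (no_types, lifting))
qed

lemma abs_integral_const_mult_diff_le:
  fixes g h :: "real \<Rightarrow> real"
  assumes g: "g absolutely_integrable_on {t..t'}" and hg: "(\<lambda>s. h s * g s) integrable_on {t..t'}"
    and close: "\<And>s. s \<in> {t..t'} \<Longrightarrow> \<bar>c - h s\<bar> \<le> \<epsilon>"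
  shows "\<bar>c * integral {t..t'} g - integral {t..t'} (\<lambda>s. h s * g s)\<bar>
         \<le> \<epsilon> * integral {t..t'} (\<lambda>s. \<bar>g s\<bar>)"
proof -
  have g_int: "g integrable_on {t..t'}" and abs_g_int: "(\<lambda>s. \<bar>g s\<bar>) integrable_on {t..t'}"
    using g by (auto simp: absolutely_integrable_on_def)
  have cg_int: "(\<lambda>s. c * g s) integrable_on {t..t'}"
    using integrable_on_cmult_left[OF g_int] by simp
  have "c * integral {t..t'} g - integral {t..t'} (\<lambda>s. h s * g s)
      = integral {t..t'} (\<lambda>s. (c - h s) * g s)"
    using integral_diff[OF cg_int hg] by (simp add: left_diff_distrib)
  moreover have "norm (integral {t..t'} (\<lambda>s. (c - h s) * g s)) \<le> integral {t..t'} (\<lambda>s. \<epsilon> * \<bar>g s\<bar>)"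
  proof (rule integral_norm_bound_integral)
    show "(\<lambda>s. (c - h s) * g s) integrable_on {t..t'}"
      unfolding left_diff_distrib using integrable_diff[OF cg_int hg] .
    show "(\<lambda>s. \<epsilon> * \<bar>g s\<bar>) integrable_on {t..t'}"
      using integrable_on_cmult_left[OF abs_g_int] by simp
    show "norm ((c - h s) * g s) \<le> \<epsilon> * \<bar>g s\<bar>" if "s \<in> {t..t'}" for s
      using close[OF that] by (simp add: abs_mult mult_right_mono)
  qed
  ultimately show ?thesis
    by simp
qed

text \<open>Differentiability of \<open>\<phi>\<close> is needed only on \<open>(0, \<infinity>)\<close>, so powers \<open>y\<^bsup>\<alpha>\<^esup>\<close> qualify even
  where \<open>\<eta>\<close> vanishes. By the mean value theorem and uniform continuity of \<open>\<psi> \<circ> \<eta>\<close>, the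
  increments of \<open>\<phi> (\<eta> t) - \<integral>\<^sub>a\<^sup>t (\<psi> \<circ> \<eta>) g\<close> over short intervals are at most
  \<open>\<epsilon> \<integral> |g|\<close>, so this function is constant.\<close>
lemma has_integral_chain_rule_nonneg:
  fixes \<eta> g \<phi> \<psi> :: "real \<Rightarrow> real"
  assumes "a \<le> b" and g: "g absolutely_integrable_on {a..b}"
    and \<eta>: "\<forall>t\<in>{a..b}. \<eta> t = \<eta> a + integral {a..t} g"
    and nonneg: "\<forall>t\<in>{a..b}. 0 \<le> \<eta> t"
    and \<phi>: "continuous_on {0..} \<phi>" and \<psi>: "continuous_on {0..} \<psi>"
    and der: "\<And>z. 0 < z \<Longrightarrow> (\<phi> has_real_derivative \<psi> z) (at z)"
  shows "((\<lambda>s. \<psi> (\<eta> s) * g s) has_integral \<phi> (\<eta> b) - \<phi> (\<eta> a)) {a..b}"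
proof -
  have g_int: "g integrable_on {a..b}" and abs_g_int: "(\<lambda>s. \<bar>g s\<bar>) integrable_on {a..b}"
    using g by (auto simp: absolutely_integrable_on_def)
  have \<eta>_cont: "continuous_on {a..b} \<eta>"
    by (rule continuous_on_if_indefinite_integral[OF g_int \<eta>])
  have h_cont: "continuous_on {a..b} (\<lambda>s. \<psi> (\<eta> s))"
    by (rule continuous_on_compose2[OF \<psi> \<eta>_cont]) (use nonneg in auto)
  have "(\<lambda>s. \<psi> (\<eta> s) * g s) absolutely_integrable_on {a..b}"
  proof (rule absolutely_integrable_bounded_measurable_product_real[OF _ _ _ g])
    show "(\<lambda>s. \<psi> (\<eta> s)) \<in> borel_measurable (lebesgue_on {a..b})"
      by (rule continuous_imp_measurable_on_sets_lebesgue[OF h_cont]) auto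
    show "bounded ((\<lambda>s. \<psi> (\<eta> s)) ` {a..b})"
      by (rule compact_imp_bounded, rule compact_continuous_image[OF h_cont]) auto
  qed auto
  then have hg_int: "(\<lambda>s. \<psi> (\<eta> s) * g s) integrable_on {a..b}"
    by (auto simp: absolutely_integrable_on_def)
  have increment: "integral {a..t'} f - integral {a..t} f = integral {t..t'} f"
    if "f integrable_on {a..b}" "a \<le> t" "t \<le> t'" "t' \<le> b" for f :: "real \<Rightarrow> real" and t t'
    using Henstock_Kurzweil_Integration.integral_combine[of a t t' f] integrable_on_subinterval[OF that(1), of a t'] that
    by auto
  define F where "F t = \<phi> (\<eta> t) - integral {a..t} (\<lambda>s. \<psi> (\<eta> s) * g s)" for t
  define G where "G t = integral {a..t} (\<lambda>s. \<bar>g s\<bar>)" for t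
  have "F b = F a"
  proof (rule eq_if_increments_bounded[OF \<open>a \<le> b\<close>])
    fix \<epsilon> :: real
    assume "\<epsilon> > 0"
    obtain \<delta> where "\<delta> > 0" and \<delta>: "\<forall>s\<in>{a..b}. \<forall>s'\<in>{a..b}. dist s' s < \<delta> \<longrightarrow>
        dist (\<psi> (\<eta> s')) (\<psi> (\<eta> s)) < \<epsilon>"
      using compact_uniformly_continuous[OF h_cont compact_Icc] \<open>\<epsilon> > 0\<close>
      unfolding uniformly_continuous_on_def by metis
    show "\<exists>\<delta>>0. \<forall>t t'. a \<le> t \<longrightarrow> t \<le> t' \<longrightarrow> t' \<le> b \<longrightarrow> t' - t < \<delta> \<longrightarrow>
        \<bar>F t' - F t\<bar> \<le> \<epsilon> * (G t' - G t)"
    proof (intro exI[of _ \<delta>] conjI allI impI \<open>\<delta> > 0\<close>)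
      fix t t'
      assume t: "a \<le> t" "t \<le> t'" "t' \<le> b" "t' - t < \<delta>"
      have sub: "{t..t'} \<subseteq> {a..b}"
        using t by auto
      have "\<forall>s\<in>{t..t'}. 0 \<le> \<eta> s"
        using nonneg sub by blast
      then obtain s where s: "s \<in> {t..t'}" "\<phi> (\<eta> t') - \<phi> (\<eta> t) = \<psi> (\<eta> s) * (\<eta> t' - \<eta> t)"
        by (rule MVT_nonneg_comp[OF t(2) continuous_on_subset[OF \<eta>_cont sub] _ \<phi> der])
      have "\<eta> t' - \<eta> t = integral {t..t'} g"
        using \<eta>[rule_format, of t] \<eta>[rule_format, of t'] increment[OF g_int t(1-3)] t by simp
      then have "F t' - F t
          = \<psi> (\<eta> s) * integral {t..t'} g - integral {t..t'} (\<lambda>s. \<psi> (\<eta> s) * g s)"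
        using s(2) increment[OF hg_int t(1-3)] unfolding F_def by (simp add: algebra_simps)
      moreover have "\<bar>\<psi> (\<eta> s) * integral {t..t'} g - integral {t..t'} (\<lambda>s. \<psi> (\<eta> s) * g s)\<bar>
          \<le> \<epsilon> * integral {t..t'} (\<lambda>s. \<bar>g s\<bar>)"
      proof (rule abs_integral_const_mult_diff_le)
        show "g absolutely_integrable_on {t..t'}"
          using absolutely_integrable_on_subinterval[OF g sub] .
        show "(\<lambda>s. \<psi> (\<eta> s) * g s) integrable_on {t..t'}"
          using integrable_on_subinterval[OF hg_int sub] .
        show "\<bar>\<psi> (\<eta> s) - \<psi> (\<eta> s')\<bar> \<le> \<epsilon>" if "s' \<in> {t..t'}" for s'
        proof -
          have "dist s s' < \<delta>"
            using s(1) that t(4) by (auto simp: dist_real_def)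
          then have "dist (\<psi> (\<eta> s)) (\<psi> (\<eta> s')) < \<epsilon>"
            using \<delta> s(1) that sub by blast
          then show ?thesis
            by (simp add: dist_real_def)
        qed
      qed
      moreover have "integral {t..t'} (\<lambda>s. \<bar>g s\<bar>) = G t' - G t"
        using increment[OF abs_g_int t(1-3)] unfolding G_def by simp
      ultimately show "\<bar>F t' - F t\<bar> \<le> \<epsilon> * (G t' - G t)"
        by simp
    qed
  qed
  then have "integral {a..b} (\<lambda>s. \<psi> (\<eta> s) * g s) = \<phi> (\<eta> b) - \<phi> (\<eta> a)"
    unfolding F_def by simp
  with integrable_integral[OF hg_int] show ?thesis
    by simp
qed

lemma Youngs_inequality_scaled:
  fixes p q \<mu> y z :: real
  assumes "p > 1" "q > 1" "1/p + 1/q = 1" "\<mu> > 0" "y \<ge> 0" "z \<ge> 0"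
  shows "y * z \<le> \<mu> powr p * y powr p / p + z powr q / (q * \<mu> powr q)"
proof -
  have "y * z = (\<mu> * y) * (z / \<mu>)"
    using assms(4) by simp
  also have "\<dots> \<le> (\<mu> * y) powr p / p + (z / \<mu>) powr q / q"
    by (rule Youngs_inequality) (use assms in auto)
  also have "\<dots> = \<mu> powr p * y powr p / p + z powr q / (q * \<mu> powr q)"
    using assms by (simp add: powr_mult powr_divide)
  finally show ?thesis .
qed

lemma Youngs_inequality_optimal_scale:
  fixes p q A B :: real
  assumes "p > 1" "q > 1" "1/p + 1/q = 1" "A > 0" "B > 0"
  obtains \<mu> where "\<mu> > 0" "\<mu> powr p * A / p + B / (q * \<mu> powr q) = A powr (1/p) * B powr (1/q)"
proof
  define \<mu> where "\<mu> = (B / A) powr (1 / (p * q))"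
  have conjugate: "1 - 1/q = 1/p" "1 - 1/p = 1/q"
    using assms(3) by linarith+
  show "\<mu> > 0"
    using assms by (simp add: \<mu>_def)
  have "\<mu> powr p * A = A powr (1/p) * B powr (1/q)"
  proof -
    have "\<mu> powr p * A = B powr (1/q) * A powr (1 - 1/q)"
      using assms by (simp add: \<mu>_def powr_powr powr_divide powr_diff)
    then show ?thesis
      unfolding conjugate(1) by (simp add: algebra_simps)
  qed
  moreover have "B / (q * \<mu> powr q) = A powr (1/p) * B powr (1/q) / q"
  proof -
    have "B / \<mu> powr q = B powr (1 - 1/p) * A powr (1/p)"
      using assms by (simp add: \<mu>_def powr_powr powr_divide powr_diff)
    then show ?thesis
      unfolding conjugate(2) by (metis divide_divide_eq_left mult.commute)
  qed
  ultimately have "\<mu> powr p * A / p + B / (q * \<mu> powr q) = A powr (1/p) * B powr (1/q) * (1/p + 1/q)"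
    by (simp add: distrib_left)
  then show "\<mu> powr p * A / p + B / (q * \<mu> powr q) = A powr (1/p) * B powr (1/q)"
    using assms(3) by simp
qed

definition min_cost :: "real \<Rightarrow> real \<Rightarrow> real \<Rightarrow> real" where
  "min_cost q a v = q powr (q - 1) / (2*q - 1) powr q * v powr (2*q - 1) / a powr (q - 1)"

lemma min_cost_le_if_powr_bound:
  fixes q a v E :: real
  assumes q: "q > 1" and "a > 0" "v > 0" "E > 0"
    and bound: "v powr ((2*q - 1)/q) \<le> (2*q - 1)/q * a powr ((q - 1)/q) * E powr (1/q)"
  shows "min_cost q a v \<le> E / q"
proof -
  have "v powr (2*q - 1) = (v powr ((2*q - 1)/q)) powr q"
    using q by (simp add: powr_powr)
  also have "\<dots> \<le> ((2*q - 1)/q * a powr ((q - 1)/q) * E powr (1/q)) powr q"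
    by (rule powr_mono2) (use assms in auto)
  also have "\<dots> = ((2*q - 1)/q) powr q * (a powr ((q - 1)/q)) powr q * (E powr (1/q)) powr q"
    using q by (simp only: powr_mult mult_nonneg_nonneg powr_nonneg_iff divide_nonneg_pos)
  also have "\<dots> = ((2*q - 1)/q) powr q * a powr (q - 1) * E"
    using assms by (simp add: powr_powr)
  finally have "v powr (2*q - 1) / a powr (q - 1) \<le> ((2*q - 1)/q) powr q * E"
    using \<open>a > 0\<close> by (simp add: divide_le_eq mult.commute mult.left_commute)
  then have "q powr (q - 1) / (2*q - 1) powr q * (v powr (2*q - 1) / a powr (q - 1))
      \<le> q powr (q - 1) / (2*q - 1) powr q * (((2*q - 1)/q) powr q * E)"
    by (rule mult_left_mono) simp
  then have "min_cost q a v \<le> q powr (q - 1) / (2*q - 1) powr q * (((2*q - 1)/q) powr q * E)"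
    unfolding min_cost_def by simp
  also have "\<dots> = q powr (q - 1) / q powr q * E"
    using q by (simp add: powr_divide)
  also have "\<dots> = E / q"
    using q by (simp add: powr_diff)
  finally show ?thesis .
qed

lemma W1q_pair_powr_has_integral:
  fixes \<alpha> \<theta> v :: real
  assumes "\<alpha> > 1" "0 \<le> \<theta>" and W: "W1q_pair q \<theta> \<eta> g" and "\<eta> 0 = v" "\<eta> \<theta> = 0"
    and nonneg: "\<forall>s\<in>{0..\<theta>}. 0 \<le> \<eta> s"
  shows "((\<lambda>s. - (\<alpha> * \<eta> s powr (\<alpha> - 1) * g s)) has_integral v powr \<alpha>) {0..\<theta>}"
proof -
  have g: "g absolutely_integrable_on {0..\<theta>}" and \<eta>: "\<forall>t\<in>{0..\<theta>}. \<eta> t = \<eta> 0 + integral {0..t} g"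
    using W unfolding W1q_pair_def by blast+
  have \<phi>: "continuous_on {0..} (\<lambda>y::real. y powr \<alpha>)"
    by (rule continuous_on_powr') (use \<open>\<alpha> > 1\<close> in \<open>auto intro: continuous_intros\<close>)
  have \<psi>: "continuous_on {0..} (\<lambda>y::real. \<alpha> * y powr (\<alpha> - 1))"
    by (intro continuous_intros continuous_on_powr') (use \<open>\<alpha> > 1\<close> in \<open>auto intro: continuous_intros\<close>)
  have der: "\<And>z. 0 < z \<Longrightarrow> ((\<lambda>y. y powr \<alpha>) has_real_derivative \<alpha> * z powr (\<alpha> - 1)) (at z)"
    by (rule has_real_derivative_powr)
  have "((\<lambda>s. \<alpha> * \<eta> s powr (\<alpha> - 1) * g s) has_integral \<eta> \<theta> powr \<alpha> - \<eta> 0 powr \<alpha>) {0..\<theta>}"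
    using has_integral_chain_rule_nonneg[OF \<open>0 \<le> \<theta>\<close> g \<eta> nonneg \<phi> \<psi> der] .
  from has_integral_neg[OF this] show ?thesis
    using \<open>\<eta> 0 = v\<close> \<open>\<eta> \<theta> = 0\<close> \<open>\<alpha> > 1\<close> by simp
qed

text \<open>Since \<open>(\<alpha> - 1) p = 1\<close>, Young's inequality turns the integrand \<open>\<alpha> \<eta>\<^bsup>\<alpha>-1\<^esup> |\<eta>'|\<close> of the
  chain rule into a combination of \<open>\<eta>\<close> and \<open>|\<eta>'|\<^sup>q\<close>.\<close>
lemma W1q_pair_powr_le_Young_bound:
  fixes \<alpha> p q \<mu> \<theta> a v :: real
  assumes "\<alpha> > 1" "p > 1" "q > 1" "1/p + 1/q = 1" "(\<alpha> - 1) * p = 1" "\<mu> > 0" "0 \<le> \<theta>"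
    and W: "W1q_pair q \<theta> \<eta> g" and "\<eta> 0 = v" "\<eta> \<theta> = 0" and nonneg: "\<forall>s\<in>{0..\<theta>}. 0 \<le> \<eta> s"
    and area: "integral {0..\<theta>} \<eta> \<le> a"
  shows "v powr \<alpha> \<le> \<alpha> * (\<mu> powr p * a / p + integral {0..\<theta>} (\<lambda>s. \<bar>g s\<bar> powr q) / (q * \<mu> powr q))"
proof -
  define E where "E = integral {0..\<theta>} (\<lambda>s. \<bar>g s\<bar> powr q)"
  define c1 where "c1 = \<alpha> * \<mu> powr p / p"
  define c2 where "c2 = \<alpha> / (q * \<mu> powr q)"
  have "c1 \<ge> 0"
    using assms(1,2,6) by (simp add: c1_def)
  have g: "g absolutely_integrable_on {0..\<theta>}" and gq: "(\<lambda>s. \<bar>g s\<bar> powr q) integrable_on {0..\<theta>}"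
    and \<eta>: "\<forall>t\<in>{0..\<theta>}. \<eta> t = \<eta> 0 + integral {0..t} g"
    using W unfolding W1q_pair_def by blast+
  have \<eta>_int: "\<eta> integrable_on {0..\<theta>}"
    using integrable_continuous_interval continuous_on_if_indefinite_integral[OF _ \<eta>] g
    by (auto simp: absolutely_integrable_on_def)
  have pointwise: "- (\<alpha> * \<eta> s powr (\<alpha> - 1) * g s) \<le> c1 * \<eta> s + c2 * \<bar>g s\<bar> powr q"
    if "s \<in> {0..\<theta>}" for s
  proof -
    have "- (\<alpha> * \<eta> s powr (\<alpha> - 1) * g s) \<le> \<alpha> * \<eta> s powr (\<alpha> - 1) * \<bar>g s\<bar>"
      using mult_left_mono[of "- g s" "\<bar>g s\<bar>" "\<alpha> * \<eta> s powr (\<alpha> - 1)"] assms(1) by simp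
    also have "\<dots> \<le> \<alpha> * (\<mu> powr p * (\<eta> s powr (\<alpha> - 1)) powr p / p + \<bar>g s\<bar> powr q / (q * \<mu> powr q))"
      unfolding mult.assoc
      by (rule mult_left_mono[OF Youngs_inequality_scaled]) (use assms in auto)
    also have "(\<eta> s powr (\<alpha> - 1)) powr p = \<eta> s"
      using assms(5) nonneg that by (simp add: powr_powr)
    finally show ?thesis
      by (simp add: c1_def c2_def algebra_simps)
  qed
  have "v powr \<alpha> \<le> integral {0..\<theta>} (\<lambda>s. c1 * \<eta> s + c2 * \<bar>g s\<bar> powr q)"
    using has_integral_le[OF W1q_pair_powr_has_integral[OF assms(1,7) W assms(9,10) nonneg]
        integrable_integral pointwise]
      integrable_add[OF integrable_on_cmult_left[OF \<eta>_int] integrable_on_cmult_left[OF gq]]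
    by simp
  also have "\<dots> = c1 * integral {0..\<theta>} \<eta> + c2 * E"
    unfolding E_def
    using integrable_on_cmult_left[OF \<eta>_int] integrable_on_cmult_left[OF gq] \<eta>_int gq
    by (simp add: integral_add)
  also have "\<dots> \<le> c1 * a + c2 * E"
    using area \<open>c1 \<ge> 0\<close> by (simp add: mult_left_mono)
  also have "\<dots> = \<alpha> * (\<mu> powr p * a / p + E / (q * \<mu> powr q))"
    by (simp add: c1_def c2_def distrib_left mult.assoc)
  finally show ?thesis
    unfolding E_def .
qed

text \<open>The scale \<open>\<mu>\<close> is optimised for \<open>\<integral> |\<eta>'|\<^sup>q + q \<epsilon>\<close> rather than \<open>\<integral> |\<eta>'|\<^sup>q\<close>, which
  might vanish a priori.\<close>
lemma W1q_pair_cost_lower_bound: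
  fixes q \<theta> a v :: real and \<eta> g :: "real \<Rightarrow> real"
  assumes q: "q > 1" and "0 \<le> \<theta>" "a > 0" "v > 0"
    and W: "W1q_pair q \<theta> \<eta> g" and "\<eta> 0 = v" "\<eta> \<theta> = 0" and "\<forall>s\<in>{0..\<theta>}. 0 \<le> \<eta> s"
    and "integral {0..\<theta>} \<eta> \<le> a"
  shows "min_cost q a v \<le> (1/q) * integral {0..\<theta>} (\<lambda>s. \<bar>g s\<bar> powr q)"
proof -
  define \<alpha> where "\<alpha> = (2*q - 1)/q"
  define p where "p = q/(q - 1)"
  define E where "E = integral {0..\<theta>} (\<lambda>s. \<bar>g s\<bar> powr q)"
  have \<alpha>p: "\<alpha> > 1" "p > 1" "1/p + 1/q = 1" "(\<alpha> - 1) * p = 1" "1/p = (q - 1)/q"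
    using q by (auto simp: \<alpha>_def p_def field_simps)
  have "E \<ge> 0"
    using W unfolding E_def W1q_pair_def by (blast intro: integral_nonneg abs_ge_zero powr_ge_zero)
  have "min_cost q a v \<le> E / q + \<epsilon>" if "\<epsilon> > 0" for \<epsilon>
  proof -
    have "E + q * \<epsilon> > 0"
      using \<open>E \<ge> 0\<close> that q by (simp add: add_nonneg_pos)
    then obtain \<mu> where "\<mu> > 0"
      and \<mu>: "\<mu> powr p * a / p + (E + q * \<epsilon>) / (q * \<mu> powr q) = a powr (1/p) * (E + q * \<epsilon>) powr (1/q)"
      using Youngs_inequality_optimal_scale[OF \<alpha>p(2) q \<alpha>p(3) \<open>a > 0\<close>] by blast
    have "v powr \<alpha> \<le> \<alpha> * (\<mu> powr p * a / p + E / (q * \<mu> powr q))"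
      unfolding E_def by (rule W1q_pair_powr_le_Young_bound) (use \<alpha>p q \<open>\<mu> > 0\<close> assms in auto)
    also have "\<dots> \<le> \<alpha> * (\<mu> powr p * a / p + (E + q * \<epsilon>) / (q * \<mu> powr q))"
      using \<alpha>p(1) q that \<open>\<mu> > 0\<close> by (intro mult_left_mono add_left_mono divide_right_mono) auto
    finally have "min_cost q a v \<le> (E + q * \<epsilon>) / q"
      unfolding \<mu> using min_cost_le_if_powr_bound[OF q \<open>a > 0\<close> \<open>v > 0\<close> \<open>E + q * \<epsilon> > 0\<close>]
      by (simp add: \<alpha>_def \<alpha>p(5) mult.assoc)
    also have "\<dots> = E / q + \<epsilon>"
      using q by (simp add: field_simps)
    finally show ?thesis .
  qed
  then have "min_cost q a v \<le> E / q"
    by (rule field_le_epsilon)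
  then show ?thesis
    unfolding E_def by simp
qed

definition admissible_path ::
    "real \<Rightarrow> real \<Rightarrow> real \<Rightarrow> real \<Rightarrow> (real \<Rightarrow> real) \<Rightarrow> (real \<Rightarrow> real) \<Rightarrow> bool" where
  "admissible_path q x v \<theta> \<eta> g \<longleftrightarrow> W1q_pair q \<theta> \<eta> g \<and> \<eta> 0 = v \<and> \<eta> \<theta> = 0 \<and>
     (\<forall>s\<in>{0..\<theta>}. \<eta> s \<ge> 0) \<and> x + integral {0..\<theta>} \<eta> \<le> 0"

definition kinetic_cost :: "real \<Rightarrow> real \<Rightarrow> (real \<Rightarrow> real) \<Rightarrow> real" where
  "kinetic_cost q \<theta> g = (1/q) * integral {0..\<theta>} (\<lambda>s. \<bar>g s\<bar> powr q)"

definition admissible_costs :: "real \<Rightarrow> real \<Rightarrow> real \<Rightarrow> real \<Rightarrow> real set" where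
  "admissible_costs q x v \<theta> = {kinetic_cost q \<theta> g | \<eta> g. admissible_path q x v \<theta> \<eta> g}"

lemma I_cost_eq_Inf_admissible_costs: "I_cost q x v \<theta> = Inf (admissible_costs q x v \<theta>)"
  unfolding I_cost_def admissible_costs_def admissible_path_def kinetic_cost_def by simp

lemma bdd_below_admissible_costs:
  assumes "q > 0"
  shows "bdd_below (admissible_costs q x v \<theta>)"
proof (rule bdd_belowI)
  fix c
  assume "c \<in> admissible_costs q x v \<theta>"
  then obtain \<eta> g where "c = kinetic_cost q \<theta> g" "W1q_pair q \<theta> \<eta> g"
    unfolding admissible_costs_def admissible_path_def by blast
  then have "(\<lambda>s. \<bar>g s\<bar> powr q) integrable_on {0..\<theta>}"
    unfolding W1q_pair_def by blast
  then have "0 \<le> integral {0..\<theta>} (\<lambda>s. \<bar>g s\<bar> powr q)"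
    by (rule integral_nonneg) simp
  then show "0 \<le> c"
    using assms \<open>c = kinetic_cost q \<theta> g\<close> unfolding kinetic_cost_def by simp
qed

lemma min_cost_le_admissible_cost:
  assumes "q > 1" "0 \<le> \<theta>" "x < 0" "v > 0" "c \<in> admissible_costs q x v \<theta>"
  shows "min_cost q \<bar>x\<bar> v \<le> c"
proof -
  obtain \<eta> g where "c = kinetic_cost q \<theta> g" "admissible_path q x v \<theta> \<eta> g"
    using assms(5) unfolding admissible_costs_def by blast
  then show ?thesis
    using W1q_pair_cost_lower_bound[OF assms(1,2) _ assms(4), of "\<bar>x\<bar>" \<eta> g] assms(3)
    unfolding admissible_path_def kinetic_cost_def by auto
qed

definition extend_by_zero :: "real \<Rightarrow> (real \<Rightarrow> real) \<Rightarrow> real \<Rightarrow> real" where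
  "extend_by_zero \<theta> h = (\<lambda>s. if s \<in> {0..\<theta>} then h s else 0)"

lemma integral_extend_by_zero:
  "integral {0..t} (extend_by_zero \<theta> h) = integral {0..min \<theta> t} h"
proof -
  have "{0..\<theta>} \<inter> {0..t} = {0..min \<theta> t}"
    by auto
  then show ?thesis
    unfolding extend_by_zero_def by (simp only: integral_restrict_Int)
qed

lemma integrable_extend_by_zero:
  assumes "h integrable_on {0..\<theta>}"
  shows "extend_by_zero \<theta> h integrable_on {0..t}"
proof -
  have "{0..\<theta>} \<inter> {0..t} = {0..min \<theta> t}"
    by auto
  moreover have "h integrable_on {0..min \<theta> t}"
    by (rule integrable_on_subinterval[OF assms]) auto
  ultimately show ?thesis
    unfolding extend_by_zero_def by (simp only: integrable_restrict_Int)
qed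

lemma W1q_pair_extend_by_zero:
  assumes "0 \<le> \<theta>1" "\<theta>1 \<le> \<theta>2" and W: "W1q_pair q \<theta>1 \<eta> g" and "\<eta> \<theta>1 = 0"
  shows "W1q_pair q \<theta>2 (extend_by_zero \<theta>1 \<eta>) (extend_by_zero \<theta>1 g)"
proof -
  have g_abs: "g absolutely_integrable_on {0..\<theta>1}"
    and gq: "(\<lambda>s. \<bar>g s\<bar> powr q) integrable_on {0..\<theta>1}"
    and \<eta>: "\<forall>t\<in>{0..\<theta>1}. \<eta> t = \<eta> 0 + integral {0..t} g"
    using W unfolding W1q_pair_def by blast+
  have g: "g integrable_on {0..\<theta>1}" "(\<lambda>s. \<bar>g s\<bar>) integrable_on {0..\<theta>1}"
    using g_abs by (auto simp: absolutely_integrable_on_def)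
  have abs_ext: "(\<lambda>s. \<bar>extend_by_zero \<theta>1 g s\<bar>) = extend_by_zero \<theta>1 (\<lambda>s. \<bar>g s\<bar>)"
    and powr_ext: "(\<lambda>s. \<bar>extend_by_zero \<theta>1 g s\<bar> powr q) = extend_by_zero \<theta>1 (\<lambda>s. \<bar>g s\<bar> powr q)"
    by (auto simp: extend_by_zero_def)
  have ext0: "extend_by_zero \<theta>1 \<eta> 0 = \<eta> 0"
    using \<open>0 \<le> \<theta>1\<close> by (simp add: extend_by_zero_def)
  have "extend_by_zero \<theta>1 \<eta> t = extend_by_zero \<theta>1 \<eta> 0 + integral {0..t} (extend_by_zero \<theta>1 g)"
    if "t \<in> {0..\<theta>2}" for t
  proof (cases "t \<le> \<theta>1")
    case True
    then have "extend_by_zero \<theta>1 \<eta> t = \<eta> t" "min \<theta>1 t = t"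
      using that by (auto simp: extend_by_zero_def)
    then show ?thesis
      using integral_extend_by_zero[of t \<theta>1 g] ext0 \<eta>[rule_format, of t] that True by simp
  next
    case False
    then have "extend_by_zero \<theta>1 \<eta> t = 0" "min \<theta>1 t = \<theta>1"
      by (auto simp: extend_by_zero_def)
    then show ?thesis
      using integral_extend_by_zero[of t \<theta>1 g] ext0 \<eta>[rule_format, of \<theta>1] \<open>0 \<le> \<theta>1\<close> \<open>\<eta> \<theta>1 = 0\<close>
      by simp
  qed
  moreover have "extend_by_zero \<theta>1 g absolutely_integrable_on {0..\<theta>2}"
    unfolding absolutely_integrable_on_def real_norm_def abs_ext
    using integrable_extend_by_zero[OF g(1)] integrable_extend_by_zero[OF g(2)] by blast
  moreover have "(\<lambda>s. \<bar>extend_by_zero \<theta>1 g s\<bar> powr q) integrable_on {0..\<theta>2}"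
    unfolding powr_ext by (rule integrable_extend_by_zero[OF gq])
  ultimately show ?thesis
    unfolding W1q_pair_def by blast
qed

lemma admissible_costs_mono:
  assumes "0 \<le> \<theta>1" "\<theta>1 \<le> \<theta>2"
  shows "admissible_costs q x v \<theta>1 \<subseteq> admissible_costs q x v \<theta>2"
proof
  fix c
  assume "c \<in> admissible_costs q x v \<theta>1"
  then obtain \<eta> g where c: "c = kinetic_cost q \<theta>1 g" and adm: "admissible_path q x v \<theta>1 \<eta> g"
    unfolding admissible_costs_def by blast
  have "integral {0..\<theta>2} (extend_by_zero \<theta>1 \<eta>) = integral {0..\<theta>1} \<eta>"
    using assms by (simp add: integral_extend_by_zero min_def)
  moreover have "extend_by_zero \<theta>1 \<eta> 0 = \<eta> 0" "extend_by_zero \<theta>1 \<eta> \<theta>2 = 0"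
    and "\<forall>s\<in>{0..\<theta>2}. extend_by_zero \<theta>1 \<eta> s \<ge> 0"
    using adm assms unfolding admissible_path_def extend_by_zero_def by auto
  ultimately have "admissible_path q x v \<theta>2 (extend_by_zero \<theta>1 \<eta>) (extend_by_zero \<theta>1 g)"
    using adm W1q_pair_extend_by_zero[OF assms] unfolding admissible_path_def by simp
  moreover have "kinetic_cost q \<theta>2 (extend_by_zero \<theta>1 g) = c"
  proof -
    have "(\<lambda>s. \<bar>extend_by_zero \<theta>1 g s\<bar> powr q) = extend_by_zero \<theta>1 (\<lambda>s. \<bar>g s\<bar> powr q)"
      by (auto simp: extend_by_zero_def)
    then show ?thesis
      using c assms unfolding kinetic_cost_def by (simp add: integral_extend_by_zero min_def)
  qed
  ultimately show "c \<in> admissible_costs q x v \<theta>2"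
    unfolding admissible_costs_def by blast
qed

lemma continuous_on_power_profile:
  fixes \<tau> p c :: real
  assumes "\<tau> > 0" "p > 0" "t \<le> \<tau>"
  shows "continuous_on {0..t} (\<lambda>s. c * (1 - s/\<tau>) powr p)"
  by (intro continuous_on_mult[OF continuous_on_const] continuous_on_powr')
     (use assms in \<open>auto intro!: continuous_intros simp: field_simps\<close>)

lemma has_vector_derivative_power_profile:
  fixes \<tau> p c :: real
  assumes "\<tau> > 0" "s < \<tau>"
  shows "((\<lambda>s. c * (1 - s/\<tau>) powr p) has_vector_derivative - c * p / \<tau> * (1 - s/\<tau>) powr (p - 1)) (at s)"
proof -
  have "0 < 1 - s/\<tau>"
    using assms by (simp add: field_simps)
  then have "((\<lambda>s. c * (1 - s/\<tau>) powr p) has_real_derivative c * (p * (1 - s/\<tau>) powr (p - 1) * (0 - 1/\<tau>))) (at s)"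
    by (intro DERIV_cmult DERIV_chain2[OF has_real_derivative_powr])
       (use assms in \<open>auto intro!: derivative_eq_intros\<close>)
  then show ?thesis
    by (simp add: has_real_derivative_iff_has_vector_derivative algebra_simps)
qed

lemma has_integral_power_profile:
  fixes \<tau> p :: real
  assumes "\<tau> > 0" "p > 0"
  shows "((\<lambda>s. (1 - s/\<tau>) powr p) has_integral \<tau> / (p + 1)) {0..\<tau>}"
proof -
  define F where "F s = - (\<tau> / (p + 1)) * (1 - s/\<tau>) powr (p + 1)" for s
  have "((\<lambda>s. (1 - s/\<tau>) powr p) has_integral F \<tau> - F 0) {0..\<tau>}"
  proof (rule fundamental_theorem_of_calculus_interior)
    show "continuous_on {0..\<tau>} F"
      unfolding F_def by (rule continuous_on_power_profile) (use assms in auto)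
    show "(F has_vector_derivative (1 - s/\<tau>) powr p) (at s)" if "s \<in> {0<..<\<tau>}" for s
    proof -
      have "- (- (\<tau> / (p + 1))) * (p + 1) / \<tau> * (1 - s/\<tau>) powr (p + 1 - 1) = (1 - s/\<tau>) powr p"
        using assms by simp
      then show ?thesis
        using has_vector_derivative_power_profile[OF \<open>\<tau> > 0\<close>, of s "- (\<tau> / (p + 1))" "p + 1"] that
        unfolding F_def[abs_def] by simp
    qed
  qed (use assms in simp)
  then show ?thesis
    using assms by (simp add: F_def)
qed

lemma W1q_pair_power_profile:
  fixes q p v \<tau> :: real
  assumes "q > 0" "p > 1" "\<tau> > 0"
  shows "W1q_pair q \<tau> (\<lambda>s. v * (1 - s/\<tau>) powr p) (\<lambda>s. - v * p / \<tau> * (1 - s/\<tau>) powr (p - 1))"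
proof -
  define \<eta> where "\<eta> = (\<lambda>s. v * (1 - s/\<tau>) powr p)"
  define g where "g = (\<lambda>s. - v * p / \<tau> * (1 - s/\<tau>) powr (p - 1))"
  have g_cont: "continuous_on {0..\<tau>} g"
    unfolding g_def by (rule continuous_on_power_profile) (use assms in auto)
  have "(\<lambda>s. \<bar>g s\<bar> powr q) integrable_on {0..\<tau>}"
    by (intro integrable_continuous_interval continuous_on_powr' continuous_intros g_cont)
       (use assms in auto)
  moreover have "\<eta> t = \<eta> 0 + integral {0..t} g" if "t \<in> {0..\<tau>}" for t
  proof -
    have "(g has_integral \<eta> t - \<eta> 0) {0..t}"
    proof (rule fundamental_theorem_of_calculus_interior)
      show "continuous_on {0..t} \<eta>"
        unfolding \<eta>_def by (rule continuous_on_power_profile) (use assms that in auto)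
      show "(\<eta> has_vector_derivative g s) (at s)" if "s \<in> {0<..<t}" for s
        unfolding \<eta>_def g_def
        using has_vector_derivative_power_profile[OF \<open>\<tau> > 0\<close>, of s v p] that \<open>t \<in> {0..\<tau>}\<close> by simp
    qed (use that in simp)
    then show ?thesis
      by (simp add: integral_unique)
  qed
  ultimately show ?thesis
    using absolutely_integrable_continuous_real[OF g_cont]
    unfolding W1q_pair_def \<eta>_def[symmetric] g_def[symmetric] by blast
qed

lemma kinetic_cost_power_profile:
  fixes q p v \<tau> :: real
  assumes "p > 1" "(p - 1) * q = p" "v > 0" "\<tau> > 0"
  shows "kinetic_cost q \<tau> (\<lambda>s. - v * p / \<tau> * (1 - s/\<tau>) powr (p - 1))
    = (v * p / \<tau>) powr q * \<tau> / ((p + 1) * q)"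
proof -
  have "\<bar>- v * p / \<tau> * (1 - s/\<tau>) powr (p - 1)\<bar> powr q = (v * p / \<tau>) powr q * (1 - s/\<tau>) powr p"
    for s
  proof -
    have "\<bar>- v * p / \<tau> * (1 - s/\<tau>) powr (p - 1)\<bar> = (v * p / \<tau>) * (1 - s/\<tau>) powr (p - 1)"
      using assms by (simp add: abs_mult)
    then have "\<bar>- v * p / \<tau> * (1 - s/\<tau>) powr (p - 1)\<bar> powr q
        = (v * p / \<tau>) powr q * ((1 - s/\<tau>) powr (p - 1)) powr q"
      using assms by (simp only: powr_mult)
    also have "((1 - s/\<tau>) powr (p - 1)) powr q = (1 - s/\<tau>) powr p"
      using assms(2) by (simp add: powr_powr)
    finally show ?thesis .
  qed
  moreover have "integral {0..\<tau>} (\<lambda>s. (v * p / \<tau>) powr q * (1 - s/\<tau>) powr p) = (v * p / \<tau>) powr q * (\<tau> / (p + 1))"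
    using integral_unique[OF has_integral_mult_right[OF has_integral_power_profile]] assms by simp
  ultimately show ?thesis
    unfolding kinetic_cost_def by simp
qed

text \<open>Equality in Young's inequality forces \<open>|\<eta>'|\<^sup>q\<close> to be proportional to \<open>\<eta>\<close>; the
  solutions vanishing at \<open>\<tau>\<close> are the multiples of \<open>(1 - s/\<tau>)\<^sup>p\<close>.\<close>
lemma power_profile_cost_mem_admissible_costs:
  fixes q x v \<tau> :: real
  defines "p \<equiv> q / (q - 1)"
  assumes q: "q > 1" and "v > 0" "\<tau> > 0" and area: "x + v * \<tau> / (p + 1) \<le> 0"
  shows "(v * p / \<tau>) powr q * \<tau> / ((p + 1) * q) \<in> admissible_costs q x v \<tau>"
proof -
  have "p > 1" "(p - 1) * q = p"
    using q by (auto simp: p_def field_simps)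
  have "integral {0..\<tau>} (\<lambda>s. v * (1 - s/\<tau>) powr p) = v * \<tau> / (p + 1)"
    using integral_unique[OF has_integral_mult_right[OF has_integral_power_profile, of \<tau> p v]]
      \<open>\<tau> > 0\<close> \<open>p > 1\<close> by simp
  then have "admissible_path q x v \<tau> (\<lambda>s. v * (1 - s/\<tau>) powr p) (\<lambda>s. - v * p / \<tau> * (1 - s/\<tau>) powr (p - 1))"
    unfolding admissible_path_def
    using W1q_pair_power_profile[of q p \<tau> v] q area \<open>p > 1\<close> \<open>v > 0\<close> \<open>\<tau> > 0\<close> by simp
  then show ?thesis
    using kinetic_cost_power_profile[OF \<open>p > 1\<close> \<open>(p - 1) * q = p\<close> \<open>v > 0\<close> \<open>\<tau> > 0\<close>]
    unfolding admissible_costs_def by force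
qed

definition optimal_horizon :: "real \<Rightarrow> real \<Rightarrow> real \<Rightarrow> real" where
  "optimal_horizon q a v = (2*q - 1)/(q - 1) * a / v"

lemma optimal_horizon_pos:
  assumes "q > 1" "a > 0" "v > 0"
  shows "optimal_horizon q a v > 0"
  unfolding optimal_horizon_def using assms by (intro divide_pos_pos mult_pos_pos) auto

lemma optimal_horizon_area:
  assumes "q > 1" "v > 0"
  shows "v * optimal_horizon q a v / (q/(q - 1) + 1) = a"
proof -
  have "q/(q - 1) + 1 = (2*q - 1)/(q - 1)"
    using assms by (simp add: field_simps)
  moreover have "(2*q - 1)/(q - 1) > 0"
    using assms by simp
  ultimately show ?thesis
    unfolding optimal_horizon_def using assms by simp
qed

lemma power_profile_cost_at_optimal_horizon:
  fixes q a v :: real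
  defines "\<tau> \<equiv> optimal_horizon q a v" and "p \<equiv> q / (q - 1)"
  assumes q: "q > 1" and a: "a > 0" and v: "v > 0"
  shows "(v * p / \<tau>) powr q * \<tau> / ((p + 1) * q) = min_cost q a v"
proof -
  define A where "A = q - 1"
  define B where "B = 2*q - 1"
  have "A > 0" "B > 0"
    using q by (auto simp: A_def B_def)
  have "q / A + 1 = B / A"
    using \<open>A > 0\<close> by (simp add: A_def B_def field_simps)
  then have "p / \<tau> = v * q / (B * a)" "\<tau> / (p + 1) = a / v"
    unfolding p_def \<tau>_def optimal_horizon_def B_def[symmetric] A_def[symmetric]
    using \<open>A > 0\<close> \<open>B > 0\<close> a v by (simp_all add: field_simps)
  then have "v * p / \<tau> = v * v * q / (B * a)" "\<tau> / ((p + 1) * q) = a / (v * q)"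
    by (metis mult.assoc times_divide_eq_right, metis divide_divide_eq_left)
  then have "(v * p / \<tau>) powr q * \<tau> / ((p + 1) * q) = (v * v * q / (B * a)) powr q * (a / (v * q))"
    by (metis times_divide_eq_right)
  also have "(v * v * q / (B * a)) powr q = v powr q * v powr q * q powr q / (B powr q * a powr q)"
    by (simp add: powr_mult powr_divide)
  also have "v powr q * v powr q * q powr q / (B powr q * a powr q) * (a / (v * q))
      = (q powr q / q) / B powr q * (v powr q * v powr q / v) / (a powr q / a)"
  proof -
    have "V * V * Q / (Bq * Aq) * (a / (v * q)) = (Q / q) / Bq * (V * V / v) / (Aq / a)"
      if "Bq > 0" "Aq > 0" for V Q Bq Aq :: real
      using that a v q by (simp add: divide_simps)
    then show ?thesis
      by this (use \<open>B > 0\<close> a in simp_all)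
  qed
  also have "\<dots> = min_cost q a v"
  proof -
    have "q powr (q - 1) = q powr q / q" "a powr (q - 1) = a powr q / a"
      using q a by (simp_all add: powr_diff)
    moreover have "v powr (2*q - 1) = v powr q * v powr q / v"
      using v by (simp only: mult_2 powr_diff powr_add powr_one' abs_of_pos)
    ultimately show ?thesis
      unfolding min_cost_def B_def by (simp only:)
  qed
  finally show ?thesis .
qed

lemma min_cost_mem_admissible_costs:
  assumes "q > 1" "x < 0" "v > 0"
  shows "min_cost q \<bar>x\<bar> v \<in> admissible_costs q x v (optimal_horizon q \<bar>x\<bar> v)"
proof -
  define \<tau> where "\<tau> = optimal_horizon q \<bar>x\<bar> v"
  have "\<tau> > 0"
    unfolding \<tau>_def using optimal_horizon_pos assms by simp
  moreover have "x + v * \<tau> / (q/(q - 1) + 1) \<le> 0"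
    unfolding \<tau>_def using optimal_horizon_area[OF assms(1,3)] assms(2) by simp
  ultimately have "(v * (q/(q - 1)) / \<tau>) powr q * \<tau> / ((q/(q - 1) + 1) * q) \<in> admissible_costs q x v \<tau>"
    by (rule power_profile_cost_mem_admissible_costs[OF assms(1,3)])
  moreover have "(v * (q/(q - 1)) / \<tau>) powr q * \<tau> / ((q/(q - 1) + 1) * q) = min_cost q \<bar>x\<bar> v"
    unfolding \<tau>_def by (rule power_profile_cost_at_optimal_horizon) (use assms in auto)
  ultimately show ?thesis
    unfolding \<tau>_def by simp
qed

lemma admissible_costs_nonempty:
  assumes "q > 1" "x < 0" "v > 0" "\<theta> > 0"
  shows "admissible_costs q x v \<theta> \<noteq> {}"
proof -
  define \<tau> where "\<tau> = min \<theta> (optimal_horizon q \<bar>x\<bar> v)"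
  have "\<tau> > 0" "\<tau> \<le> \<theta>"
    using optimal_horizon_pos[of q "\<bar>x\<bar>" v] assms by (auto simp: \<tau>_def)
  have "v * \<tau> / (q/(q - 1) + 1) \<le> v * optimal_horizon q \<bar>x\<bar> v / (q/(q - 1) + 1)"
    using assms by (intro divide_right_mono mult_left_mono) (auto simp: \<tau>_def add_pos_pos)
  also have "\<dots> = \<bar>x\<bar>"
    by (rule optimal_horizon_area[OF assms(1,3)])
  finally have "x + v * \<tau> / (q/(q - 1) + 1) \<le> 0"
    using assms(2) by simp
  from power_profile_cost_mem_admissible_costs[OF assms(1,3) \<open>\<tau> > 0\<close> this]
  have "admissible_costs q x v \<tau> \<noteq> {}"
    by blast
  moreover have "admissible_costs q x v \<tau> \<subseteq> admissible_costs q x v \<theta>"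
    using admissible_costs_mono \<open>\<tau> > 0\<close> \<open>\<tau> \<le> \<theta>\<close> by simp
  ultimately show ?thesis
    by blast
qed

theorem lemma2p4:
  fixes q T x v :: real
  assumes "q > 1" "T > 0" "x < 0" "v > 0"
    and "(2*q - 1) / (q - 1) * \<bar>x\<bar> / v < T"
  shows "(\<forall>\<theta>1 \<theta>2. 0 < \<theta>1 \<longrightarrow> \<theta>1 \<le> \<theta>2 \<longrightarrow> \<theta>2 \<le> T \<longrightarrow> I_cost q x v \<theta>2 \<le> I_cost q x v \<theta>1)
    \<and> (\<exists>\<theta>\<in>{0<..<T}. I_cost q x v \<theta> = q powr (q - 1) / (2*q - 1) powr q * v powr (2*q - 1) / \<bar>x\<bar> powr (q - 1))
    \<and> (\<forall>\<theta>\<in>{0<..<T}. q powr (q - 1) / (2*q - 1) powr q * v powr (2*q - 1) / \<bar>x\<bar> powr (q - 1) \<le> I_cost q x v \<theta>)"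
proof -
  note q = \<open>q > 1\<close> and x = \<open>x < 0\<close> and v = \<open>v > 0\<close>
  have bdd: "bdd_below (admissible_costs q x v \<theta>)" for \<theta>
    using bdd_below_admissible_costs q by simp
  have mono: "I_cost q x v \<theta>2 \<le> I_cost q x v \<theta>1" if "0 < \<theta>1" "\<theta>1 \<le> \<theta>2" for \<theta>1 \<theta>2
    unfolding I_cost_eq_Inf_admissible_costs
    using admissible_costs_nonempty[OF q x v \<open>0 < \<theta>1\<close>] bdd admissible_costs_mono that
    by (intro cInf_superset_mono) auto
  have lower: "min_cost q \<bar>x\<bar> v \<le> I_cost q x v \<theta>" if "\<theta> > 0" for \<theta>
    unfolding I_cost_eq_Inf_admissible_costs
    using admissible_costs_nonempty[OF q x v that] min_cost_le_admissible_cost[OF q less_imp_le[OF that] x v]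
    by (rule cInf_greatest)
  define \<theta> where "\<theta> = optimal_horizon q \<bar>x\<bar> v"
  have "\<theta> \<in> {0<..<T}"
    using optimal_horizon_pos[of q "\<bar>x\<bar>" v] assms unfolding \<theta>_def optimal_horizon_def by simp
  moreover have "I_cost q x v \<theta> = min_cost q \<bar>x\<bar> v"
    using cInf_lower[OF min_cost_mem_admissible_costs[OF q x v] bdd] lower \<open>\<theta> \<in> {0<..<T}\<close>
    unfolding I_cost_eq_Inf_admissible_costs \<theta>_def by force
  ultimately show ?thesis
    using mono lower unfolding min_cost_def by auto
qed

end
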